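(* Let $N,R,k\in\mathbb{N}$. For every choice of bijections $g_1,\dots,g_R:[N]\to[N]$ there exists a $1$-layer transformer (with learned embeddings) with embedding dimension $d=\tilde O(R+k)$ and MLP width $\tilde O(R)$ that solves the $k$-hop factual recall problem with Chain-of-Thought: on every input $(s_0,r_1,\dots,r_k)\in[N]\times[R]^k$, generating autoregressively it produces tokens $s_1,\dots,s_k$ with $s_i=g_{r_i}(s_{i-1})$, so that its final output is $(g_{r_k}\circ\cdots\circ g_{r_1})(s_0)$.
   Context: Write $[N]=\{1,\dots,N\}$. Subjects are $[N]$, relations are $[R]$, each relation $r$ has a bijection $g_r:[N]\to[N]$. The transformer is over vocabulary $[N]\cup[R]$ with embeddings in $\mathbb{R}^d$; a layer applies (causal, softmax) self-attention $Z=\sum_h W_V^{(h)}X(A^{(h)})^\top$ with $A^{(h)}=\mathrm{softmax}((W_K^{(h)}X)^\top(W_Q^{(h)}X))$, a residual $\tilde X=Z+X$, and a column-wise ReLU MLP with residual $X'=\tilde X+\mathrm{MLP}(\tilde X)$. Chain-of-Thought means the model generates tokens autoregressively, each generated token (chosen by decoding the last position's output into the vocabulary) being appended to the sequence before the next forward pass. $\tilde O(\cdot)$ suppresses logarithmic factors. *)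

theory Defs
  imports Complex_Main
begin

datatype tok = Subj nat | Rel nat

definition vocab :: "nat \<Rightarrow> nat \<Rightarrow> tok set" where
  "vocab N R = Subj ` {1..N} \<union> Rel ` {1..R}"

text \<open>Vectors in R^d are functions nat \<Rightarrow> real, only the
coordinates 0..<d matter; matrices are nat \<Rightarrow> nat \<Rightarrow> real (row, column).\<close>
record tf =
  tf_dim :: nat
  tf_heads :: nat
  tf_width :: nat
  tf_emb :: "tok \<Rightarrow> nat \<Rightarrow> real"
  tf_pos :: "nat \<Rightarrow> nat \<Rightarrow> real"
  tf_WQ :: "nat \<Rightarrow> nat \<Rightarrow> nat \<Rightarrow> real"
  tf_WK :: "nat \<Rightarrow> nat \<Rightarrow> nat \<Rightarrow> real"
  tf_WV :: "nat \<Rightarrow> nat \<Rightarrow> nat \<Rightarrow> real"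
  tf_W1 :: "nat \<Rightarrow> nat \<Rightarrow> real"
  tf_b1 :: "nat \<Rightarrow> real"
  tf_W2 :: "nat \<Rightarrow> nat \<Rightarrow> real"
  tf_unemb :: "tok \<Rightarrow> nat \<Rightarrow> real"

definition matvec :: "(nat \<Rightarrow> nat \<Rightarrow> real) \<Rightarrow> nat \<Rightarrow> (nat \<Rightarrow> real) \<Rightarrow> nat \<Rightarrow> real" where
  "matvec A n x = (\<lambda>i. \<Sum>j<n. A i j * x j)"

definition tf_input :: "tf \<Rightarrow> tok list \<Rightarrow> nat \<Rightarrow> nat \<Rightarrow> real" where
  "tf_input M xs i = (\<lambda>a. tf_emb M (xs ! i) a + tf_pos M i a)"

definition attn_score :: "tf \<Rightarrow> tok list \<Rightarrow> nat \<Rightarrow> nat \<Rightarrow> nat \<Rightarrow> real" where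
  "attn_score M xs h i j =
     (\<Sum>a<tf_dim M. matvec (tf_WK M h) (tf_dim M) (tf_input M xs i) a *
                     matvec (tf_WQ M h) (tf_dim M) (tf_input M xs j) a)"

text \<open>Causal softmax attention weight of key position i for query position j (i \<le> j).\<close>
definition attn_weight :: "tf \<Rightarrow> tok list \<Rightarrow> nat \<Rightarrow> nat \<Rightarrow> nat \<Rightarrow> real" where
  "attn_weight M xs h i j =
     exp (attn_score M xs h i j) / (\<Sum>i'\<le>j. exp (attn_score M xs h i' j))"

definition attn_out :: "tf \<Rightarrow> tok list \<Rightarrow> nat \<Rightarrow> nat \<Rightarrow> real" where
  "attn_out M xs j = (\<lambda>a. \<Sum>h<tf_heads M. \<Sum>i\<le>j.
       attn_weight M xs h i j * matvec (tf_WV M h) (tf_dim M) (tf_input M xs i) a)"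

definition relu :: "real \<Rightarrow> real" where
  "relu x = max 0 x"

definition mlp :: "tf \<Rightarrow> (nat \<Rightarrow> real) \<Rightarrow> nat \<Rightarrow> real" where
  "mlp M v = (\<lambda>a. \<Sum>b<tf_width M. tf_W2 M a b *
       relu ((\<Sum>c<tf_dim M. tf_W1 M b c * v c) + tf_b1 M b))"

definition tf_output :: "tf \<Rightarrow> tok list \<Rightarrow> nat \<Rightarrow> nat \<Rightarrow> real" where
  "tf_output M xs j =
     (let xt = (\<lambda>a. attn_out M xs j a + tf_input M xs j a) in (\<lambda>a. xt a + mlp M xt a))"

definition logit :: "tf \<Rightarrow> tok list \<Rightarrow> tok \<Rightarrow> real" where
  "logit M xs t = (\<Sum>a<tf_dim M. tf_unemb M t a * tf_output M xs (length xs - 1) a)"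

definition decode :: "tf \<Rightarrow> nat \<Rightarrow> nat \<Rightarrow> tok list \<Rightarrow> tok option" where
  "decode M N R xs =
     (if \<exists>t\<in>vocab N R. \<forall>t'\<in>vocab N R. t' \<noteq> t \<longrightarrow> logit M xs t' < logit M xs t
      then Some (THE t. t \<in> vocab N R \<and>
                   (\<forall>t'\<in>vocab N R. t' \<noteq> t \<longrightarrow> logit M xs t' < logit M xs t))
      else None)"

fun cot_gen :: "tf \<Rightarrow> nat \<Rightarrow> nat \<Rightarrow> tok list \<Rightarrow> nat \<Rightarrow> tok list option" where
  "cot_gen M N R xs 0 = Some []"
| "cot_gen M N R xs (Suc n) =
     (case decode M N R xs of
        None \<Rightarrow> None
      | Some t \<Rightarrow> map_option (Cons t) (cot_gen M N R (xs @ [t]) n))"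

fun hops :: "(nat \<Rightarrow> nat \<Rightarrow> nat) \<Rightarrow> nat \<Rightarrow> nat list \<Rightarrow> nat list" where
  "hops g s [] = []"
| "hops g s (r # rs) = g r s # hops g (g r s) rs"

end

theory Submission
  imports Defs
begin

(* The residual stream stores, for every relation r, the table value g_r(s) of the current
   token s, so a hop is a lookup selected by a relation token. When s_(m+1) is generated at
   position k + m, attention head 0 puts weight at least 3/4 on position m + 1, which holds
   r_(m+1); the offset is read off one-hot positional embeddings. For each relation r, four
   ReLU neurons then pass g_r(s_m) through exactly when r = r_(m+1). At the first step the last
   token is r_k rather than a subject, so head 1 averages g_r over the prompt, whose only
   subject is s_0, and the MLP rescales this average by k + 1. The answer z lands in one
   coordinate, and the logit 2 s z - s^2 = z^2 - (s - z)^2 of Subj s is uniquely maximal at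
   s = z. The model has 4R + 2 + 2k dimensions and 4R neurons, so no logarithmic factors
   are needed. *)

lemma sum_lessThan_4_blocks:
  fixes f :: "nat \<Rightarrow> 'a::comm_monoid_add"
  shows "(\<Sum>b<4 * n. f b) = (\<Sum>r<n. f (4 * r) + f (4 * r + 1) + f (4 * r + 2) + f (4 * r + 3))"
proof -
  have "(\<Sum>b<4 * n. f b) = (\<Sum>r<n. sum f {r * 4..<r * 4 + 4})"
    by (simp add: sum.nat_group mult.commute)
  also have "\<dots> = (\<Sum>r<n. f (4 * r) + f (4 * r + 1) + f (4 * r + 2) + f (4 * r + 3))"
    by (simp add: numeral_eq_Suc add.assoc mult.commute)
  finally show ?thesis .
qed

lemma sum_if_eq_mult:
  fixes w :: "'a::semiring_0"
  assumes "finite A"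
  shows "(\<Sum>b\<in>A. (if P \<and> b = c then w else 0) * v b) = (if P \<and> c \<in> A then w * v c else 0)"
  using assms by (cases P) (simp_all add: if_distrib[of "\<lambda>z. z * _"] cong: if_cong)

lemma matvec_sparse:
  "matvec (\<lambda>a b. if P a \<and> b = c a then w a else 0) n v a = (if P a \<and> c a < n then w a * v (c a) else 0)"
  unfolding matvec_def by (simp add: sum_if_eq_mult)

lemma relu_switch_on:
  fixes x y :: real
  assumes "0 \<le> x" "0 \<le> y"
  shows "relu (x + y) - relu y = x"
  using assms by (simp add: relu_def)

lemma relu_switch_off:
  fixes x y :: real
  assumes "0 \<le> x" "x + y \<le> 0"
  shows "relu (x + y) - relu y = 0"
  using assms by (simp add: relu_def)

definition relu_gate :: "real \<Rightarrow> real \<Rightarrow> real \<Rightarrow> real \<Rightarrow> real \<Rightarrow> real" where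
  "relu_gate B T V a p =
     relu (T + B * (a - 1/2)) - relu (B * (a - 1/2))
   + (relu (V + B * (a + p - 3/2)) - relu (B * (a + p - 3/2)))"

lemma relu_gate_select:
  assumes "0 \<le> B" "0 \<le> T" "0 \<le> V" "V \<le> B/2" "1/2 \<le> a" "a \<le> 1"
  shows "relu_gate B T V a 0 = T"
proof -
  have "relu (T + B * (a - 1/2)) - relu (B * (a - 1/2)) = T"
    using assms by (intro relu_switch_on) auto
  moreover have "B * (a + 0 - 3/2) \<le> B * (-1/2)"
    using assms by (intro mult_left_mono) auto
  then have "relu (V + B * (a + 0 - 3/2)) - relu (B * (a + 0 - 3/2)) = 0"
    using assms by (intro relu_switch_off) auto
  ultimately show ?thesis
    unfolding relu_gate_def by simp
qed

lemma relu_gate_select_first: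
  assumes "0 \<le> B" "0 \<le> V" "1/2 \<le> a"
  shows "relu_gate B 0 V a 1 = V"
proof -
  have "relu (V + B * (a + 1 - 3/2)) - relu (B * (a + 1 - 3/2)) = V"
    using assms by (intro relu_switch_on) auto
  then show ?thesis
    unfolding relu_gate_def by simp
qed

lemma relu_gate_off:
  assumes "0 \<le> B" "0 \<le> T" "T \<le> B/4" "0 \<le> V" "V \<le> B/4" "a \<le> 1/4" "p \<le> 1"
  shows "relu_gate B T V a p = 0"
proof -
  have "B * (a - 1/2) \<le> B * (-1/4)" "B * (a + p - 3/2) \<le> B * (-1/4)"
    using assms by (intro mult_left_mono; simp)+
  then have "relu (T + B * (a - 1/2)) - relu (B * (a - 1/2)) = 0"
    and "relu (V + B * (a + p - 3/2)) - relu (B * (a + p - 3/2)) = 0"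
    using assms by (intro relu_switch_off; simp)+
  then show ?thesis
    unfolding relu_gate_def by simp
qed

lemma attn_weight_nonneg: "0 \<le> attn_weight M xs h i j"
  unfolding attn_weight_def by (intro divide_nonneg_nonneg sum_nonneg) auto

lemma sum_attn_weight: "(\<Sum>i\<le>j. attn_weight M xs h i j) = 1"
proof -
  have "0 < (\<Sum>i\<le>j. exp (attn_score M xs h i j))"
    by (intro sum_pos) auto
  then show ?thesis
    unfolding attn_weight_def sum_divide_distrib[symmetric] by simp
qed

lemma decode_eq_SomeI:
  assumes "t \<in> vocab N R"
    and "\<And>t'. t' \<in> vocab N R \<Longrightarrow> t' \<noteq> t \<Longrightarrow> logit M xs t' < logit M xs t"
  shows "decode M N R xs = Some t"
proof -
  let ?max = "\<lambda>t. t \<in> vocab N R \<and> (\<forall>t'\<in>vocab N R. t' \<noteq> t \<longrightarrow> logit M xs t' < logit M xs t)"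
  have "?max t" using assms by blast
  moreover have "u = t" if "?max u" for u
    using that assms(1) \<open>?max t\<close> by (metis order.asym)
  ultimately have "(THE t. ?max t) = t" by (rule the_equality)
  with \<open>?max t\<close> show ?thesis
    unfolding decode_def by auto
qed

lemma cot_gen_eq_SomeI:
  assumes "\<And>m. m < length ys \<Longrightarrow> decode M N R (xs @ take m ys) = Some (ys ! m)"
  shows "cot_gen M N R xs (length ys) = Some ys"
  using assms
proof (induction ys arbitrary: xs)
  case Nil
  show ?case by simp
next
  case (Cons y ys)
  have "decode M N R xs = Some y"
    using Cons.prems[of 0] by simp
  moreover have "cot_gen M N R (xs @ [y]) (length ys) = Some ys"
    using Cons.prems[of "Suc m" for m] by (intro Cons.IH) simp
  ultimately show ?case by simp
qed

lemma length_hops [simp]: "length (hops g s rs) = length rs"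
  by (induction rs arbitrary: s) auto

lemma nth_hops:
  "m < length rs \<Longrightarrow> hops g s rs ! m = g (rs ! m) (last (s # take m (hops g s rs)))"
proof (induction rs arbitrary: s m)
  case Nil
  then show ?case by simp
next
  case (Cons r rs)
  then show ?case by (cases m) auto
qed

lemma set_hops_subset:
  assumes "\<And>r s. r \<in> A \<Longrightarrow> s \<in> S \<Longrightarrow> g r s \<in> S" "s \<in> S" "set rs \<subseteq> A"
  shows "set (hops g s rs) \<subseteq> S"
  using assms(2,3) by (induction rs arbitrary: s) (auto intro: assms(1))

(* Layout of the residual stream, for r in 1..R and positions i < 2k: coordinate 0 is the
   constant 1 and coordinate 1 receives the answer; rel_coord r flags the token Rel r, and
   table_coord R r holds g r s for the token Subj s; sel_coord R r and avg_coord R r are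
   written by heads 0 and 1; pos_coord R i is the one-hot position. *)

definition rel_coord :: "nat \<Rightarrow> nat" where
  "rel_coord r = r + 1"

definition table_coord :: "nat \<Rightarrow> nat \<Rightarrow> nat" where
  "table_coord R r = R + 1 + r"

definition sel_coord :: "nat \<Rightarrow> nat \<Rightarrow> nat" where
  "sel_coord R r = 2 * R + 1 + r"

definition avg_coord :: "nat \<Rightarrow> nat \<Rightarrow> nat" where
  "avg_coord R r = 3 * R + 1 + r"

definition pos_coord :: "nat \<Rightarrow> nat \<Rightarrow> nat" where
  "pos_coord R i = 4 * R + 2 + i"

lemmas coord_defs = rel_coord_def table_coord_def sel_coord_def avg_coord_def pos_coord_def

definition table_entry :: "(nat \<Rightarrow> nat \<Rightarrow> nat) \<Rightarrow> tok \<Rightarrow> nat \<Rightarrow> real" where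
  "table_entry g t r = (case t of Subj s \<Rightarrow> real (g r s) | Rel _ \<Rightarrow> 0)"

definition hop_embedding :: "nat \<Rightarrow> (nat \<Rightarrow> nat \<Rightarrow> nat) \<Rightarrow> tok \<Rightarrow> nat \<Rightarrow> real" where
  "hop_embedding R g t a =
     (if a = 0 then 1
      else if 2 \<le> a \<and> a \<le> R + 1 then (if t = Rel (a - 1) then 1 else 0)
      else if R + 2 \<le> a \<and> a \<le> 2 * R + 1 then table_entry g t (a - R - 1)
      else 0)"

(* Head 0 scores ln (6k) exactly when key position i and query position j satisfy
   i + k = j + 1, and copies rel_coord into sel_coord; head 1 has zero queries, so it
   averages table_coord into avg_coord. Neurons 4r - 4, ..., 4r - 1 form the relu_gate of
   relation r with B = 4N(k + 1); pos_coord R k flags the first step j = k. *)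
definition hop_transformer :: "nat \<Rightarrow> nat \<Rightarrow> nat \<Rightarrow> (nat \<Rightarrow> nat \<Rightarrow> nat) \<Rightarrow> tf" where
  "hop_transformer N R k g = \<lparr>
     tf_dim = 4 * R + 2 + 2 * k,
     tf_heads = 2,
     tf_width = 4 * R,
     tf_emb = hop_embedding R g,
     tf_pos = (\<lambda>i a. if a = pos_coord R i then 1 else 0),
     tf_WQ = (\<lambda>h a b. if h = 0 \<and> pos_coord R 1 \<le> a \<and> b = a + k - 1 then ln (6 * real k) else 0),
     tf_WK = (\<lambda>h a b. if h = 0 \<and> pos_coord R 0 \<le> a \<and> b = a then 1 else 0),
     tf_WV = (\<lambda>h a b. if (h = 0 \<and> 2 * R + 2 \<le> a \<and> a \<le> 3 * R + 1 \<or>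
                         h = 1 \<and> 3 * R + 2 \<le> a \<and> a \<le> 4 * R + 1) \<and> b = a - 2 * R
                      then 1 else 0),
     tf_W1 = (\<lambda>b c. (if b mod 4 = 0 \<and> c = table_coord R (b div 4 + 1) then 1 else 0)
                   + (if b mod 4 = 2 \<and> c = avg_coord R (b div 4 + 1) then real k + 1 else 0)
                   + (if c = sel_coord R (b div 4 + 1) then 4 * real N * (real k + 1) else 0)
                   + (if 2 \<le> b mod 4 \<and> c = pos_coord R k then 4 * real N * (real k + 1) else 0)),
     tf_b1 = (\<lambda>b. if b mod 4 < 2 then - (2 * real N * (real k + 1)) else - (6 * real N * (real k + 1))),
     tf_W2 = (\<lambda>a b. if a = 1 then (if even b then 1 else -1) else 0),
     tf_unemb = (\<lambda>t a. case t of
                   Subj s \<Rightarrow> (if a = 0 then - (real s ^ 2) else if a = 1 then 2 * real s else 0)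
                 | Rel _ \<Rightarrow> (if a = 0 then -1 else 0))\<rparr>"

locale hop_setting =
  fixes N R k :: nat and g :: "nat \<Rightarrow> nat \<Rightarrow> nat"
  assumes k_pos: "1 \<le> k"
begin

abbreviation "M \<equiv> hop_transformer N R k g"

lemma dim_hop_transformer: "tf_dim M = 4 * R + 2 + 2 * k"
  by (simp add: hop_transformer_def)

lemma tf_input_hop:
  "tf_input M xs i a = hop_embedding R g (xs ! i) a + (if a = pos_coord R i then 1 else 0)"
  by (simp add: tf_input_def hop_transformer_def)

lemma input_const: "tf_input M xs i 0 = 1"
  by (simp add: tf_input_hop hop_embedding_def pos_coord_def)

lemma input_answer: "tf_input M xs i 1 = 0"
  by (simp add: tf_input_hop hop_embedding_def pos_coord_def)

lemma input_rel: "r \<in> {1..R} \<Longrightarrow> tf_input M xs i (rel_coord r) = (if xs ! i = Rel r then 1 else 0)"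
  by (simp add: tf_input_hop hop_embedding_def coord_defs)

lemma input_table: "r \<in> {1..R} \<Longrightarrow> tf_input M xs i (table_coord R r) = table_entry g (xs ! i) r"
  by (simp add: tf_input_hop hop_embedding_def coord_defs)

lemma input_sel: "r \<in> {1..R} \<Longrightarrow> tf_input M xs i (sel_coord R r) = 0"
  by (simp add: tf_input_hop hop_embedding_def coord_defs)

lemma input_avg: "r \<in> {1..R} \<Longrightarrow> tf_input M xs i (avg_coord R r) = 0"
  by (simp add: tf_input_hop hop_embedding_def coord_defs)

lemma input_pos: "pos_coord R 0 \<le> a \<Longrightarrow> tf_input M xs i a = (if a = pos_coord R i then 1 else 0)"
  by (simp add: tf_input_hop hop_embedding_def pos_coord_def)

lemma key_head0:
  "matvec (tf_WK M 0) (tf_dim M) v a = (if pos_coord R 0 \<le> a \<and> a < tf_dim M then v a else 0)"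
  by (simp add: hop_transformer_def matvec_sparse)

lemma query_head0:
  "matvec (tf_WQ M 0) (tf_dim M) v a =
     (if pos_coord R 1 \<le> a \<and> a + k - 1 < tf_dim M then ln (6 * real k) * v (a + k - 1) else 0)"
  by (simp add: hop_transformer_def matvec_sparse)

lemma value_head0:
  "matvec (tf_WV M 0) (tf_dim M) v a = (if 2 * R + 2 \<le> a \<and> a \<le> 3 * R + 1 then v (a - 2 * R) else 0)"
proof -
  have matrix: "tf_WV M 0 = (\<lambda>a b. if (2 * R + 2 \<le> a \<and> a \<le> 3 * R + 1) \<and> b = a - 2 * R then 1 else 0)"
    by (auto simp: hop_transformer_def)
  show ?thesis
    unfolding matrix matvec_sparse by (auto simp: dim_hop_transformer)
qed

lemma value_head1:
  "matvec (tf_WV M 1) (tf_dim M) v a = (if 3 * R + 2 \<le> a \<and> a \<le> 4 * R + 1 then v (a - 2 * R) else 0)"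
proof -
  have matrix: "tf_WV M 1 = (\<lambda>a b. if (3 * R + 2 \<le> a \<and> a \<le> 4 * R + 1) \<and> b = a - 2 * R then 1 else 0)"
    by (auto simp: hop_transformer_def)
  show ?thesis
    unfolding matrix matvec_sparse by (auto simp: dim_hop_transformer)
qed

lemma score_head0:
  assumes "i \<le> j" "k \<le> j" "j < 2 * k"
  shows "attn_score M xs 0 i j = (if i + k = j + 1 then ln (6 * real k) else 0)"
proof -
  have "attn_score M xs 0 i j =
      (\<Sum>a<tf_dim M. if a = pos_coord R i then (if i + k = j + 1 then ln (6 * real k) else 0) else 0)"
    unfolding attn_score_def key_head0 query_head0
    by (rule sum.cong) (use assms k_pos in \<open>auto simp: input_pos dim_hop_transformer pos_coord_def\<close>)
  also have "\<dots> = (if i + k = j + 1 then ln (6 * real k) else 0)"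
    using assms by (simp add: dim_hop_transformer pos_coord_def)
  finally show ?thesis .
qed

lemma weight_head0:
  assumes "i \<le> j" "k \<le> j" "j < 2 * k"
  shows "attn_weight M xs 0 i j = (if i + k = j + 1 then 6 * real k else 1) / (6 * real k + real j)"
proof -
  have exp_score: "exp (attn_score M xs 0 i' j) = 1 + (if i' + k = j + 1 then 6 * real k - 1 else 0)"
    if "i' \<le> j" for i'
    using that assms k_pos by (simp add: score_head0)
  have "(\<Sum>i'\<le>j. exp (attn_score M xs 0 i' j)) = (\<Sum>i'\<le>j. 1 + (if i' = j + 1 - k then 6 * real k - 1 else 0))"
    using assms by (intro sum.cong) (auto simp: exp_score)
  also have "\<dots> = 6 * real k + real j"
    using assms by (simp add: sum.distrib)
  finally show ?thesis
    using assms unfolding attn_weight_def by (simp add: exp_score)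
qed

lemma weight_head1: "attn_weight M xs 1 i j = 1 / (real j + 1)"
proof -
  have "attn_score M xs 1 i' j = 0" for i'
    by (simp add: attn_score_def matvec_def hop_transformer_def)
  then show ?thesis
    by (simp add: attn_weight_def)
qed

lemma attn_out_hop:
  "attn_out M xs j a =
     (if 2 * R + 2 \<le> a \<and> a \<le> 3 * R + 1
      then \<Sum>i\<le>j. attn_weight M xs 0 i j * tf_input M xs i (a - 2 * R) else 0)
   + (if 3 * R + 2 \<le> a \<and> a \<le> 4 * R + 1
      then (\<Sum>i\<le>j. tf_input M xs i (a - 2 * R)) / (real j + 1) else 0)"
proof -
  have "tf_heads M = 2"
    by (simp add: hop_transformer_def)
  then show ?thesis
    unfolding attn_out_def
    by (auto simp: numeral_2_eq_2 value_head0 value_head1[unfolded One_nat_def]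
        weight_head1[unfolded One_nat_def] sum_divide_distrib)
qed

lemma attn_out_outside_heads: "a < 2 * R + 2 \<or> 4 * R + 1 < a \<Longrightarrow> attn_out M xs j a = 0"
  by (auto simp: attn_out_hop)

lemma attn_out_sel:
  "r \<in> {1..R} \<Longrightarrow>
     attn_out M xs j (sel_coord R r) = (\<Sum>i\<le>j. attn_weight M xs 0 i j * tf_input M xs i (rel_coord r))"
  by (simp add: attn_out_hop coord_defs)

lemma attn_out_avg:
  "r \<in> {1..R} \<Longrightarrow>
     attn_out M xs j (avg_coord R r) = (\<Sum>i\<le>j. tf_input M xs i (table_coord R r)) / (real j + 1)"
  by (simp add: attn_out_hop coord_defs)

lemma preactivation_hop:
  assumes "b < 4 * R"
  shows "(\<Sum>c<tf_dim M. tf_W1 M b c * v c) =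
      (if b mod 4 = 0 then v (table_coord R (b div 4 + 1)) else 0)
    + (if b mod 4 = 2 then (real k + 1) * v (avg_coord R (b div 4 + 1)) else 0)
    + 4 * real N * (real k + 1) * v (sel_coord R (b div 4 + 1))
    + (if 2 \<le> b mod 4 then 4 * real N * (real k + 1) * v (pos_coord R k) else 0)"
proof -
  have "b div 4 < R"
    using assms by simp
  then have "table_coord R (b div 4 + 1) < tf_dim M" "avg_coord R (b div 4 + 1) < tf_dim M"
      "sel_coord R (b div 4 + 1) < tf_dim M" "pos_coord R k < tf_dim M"
    using k_pos by (simp_all add: dim_hop_transformer coord_defs)
  moreover have "tf_W1 M b c =
      (if b mod 4 = 0 \<and> c = table_coord R (b div 4 + 1) then 1 else 0)
    + (if b mod 4 = 2 \<and> c = avg_coord R (b div 4 + 1) then real k + 1 else 0)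
    + (if c = sel_coord R (b div 4 + 1) then 4 * real N * (real k + 1) else 0)
    + (if 2 \<le> b mod 4 \<and> c = pos_coord R k then 4 * real N * (real k + 1) else 0)" for c
    by (simp add: hop_transformer_def)
  ultimately show ?thesis
    by (simp only: distrib_right sum.distrib sum_if_eq_mult sum_if_eq_mult[where P = True, simplified]
        finite_lessThan lessThan_iff) simp
qed

lemma mlp_hop_const: "mlp M v 0 = 0"
  by (simp add: mlp_def hop_transformer_def)

lemma mlp_hop_answer:
  "mlp M v 1 = (\<Sum>r = 1..R. relu_gate (4 * real N * (real k + 1)) (v (table_coord R r))
      ((real k + 1) * v (avg_coord R r)) (v (sel_coord R r)) (v (pos_coord R k)))"
  (is "_ = (\<Sum>r = 1..R. ?gate r)")
proof -
  define neuron where "neuron b = tf_W2 M 1 b * relu ((\<Sum>c<tf_dim M. tf_W1 M b c * v c) + tf_b1 M b)" for b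
  have "tf_width M = 4 * R"
    by (simp add: hop_transformer_def)
  then have "mlp M v 1 = (\<Sum>b<4 * R. neuron b)"
    by (simp add: mlp_def neuron_def)
  also have "\<dots> = (\<Sum>r<R. ?gate (r + 1))"
    unfolding sum_lessThan_4_blocks
  proof (rule sum.cong)
    fix r assume "r \<in> {..<R}"
    then have block: "4 * r < 4 * R" "4 * r + 1 < 4 * R" "4 * r + 2 < 4 * R" "4 * r + 3 < 4 * R"
      by auto
    have "(4 * r) div 4 = r" "(4 * r + 1) div 4 = r" "(4 * r + 2) div 4 = r" "(4 * r + 3) div 4 = r"
        "(4 * r) mod 4 = 0" "(4 * r + 1) mod 4 = 1" "(4 * r + 2) mod 4 = 2" "(4 * r + 3) mod 4 = 3"
      by presburger+
    then show "neuron (4 * r) + neuron (4 * r + 1) + neuron (4 * r + 2) + neuron (4 * r + 3) = ?gate (r + 1)"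
      unfolding neuron_def preactivation_hop[OF block(1)] preactivation_hop[OF block(2)]
        preactivation_hop[OF block(3)] preactivation_hop[OF block(4)] relu_gate_def
      by (simp add: hop_transformer_def algebra_simps)
  qed simp
  also have "\<dots> = (\<Sum>r = 1..R. ?gate r)"
    unfolding One_nat_def sum.atLeast1_atMost_eq by simp
  finally show ?thesis .
qed

lemma logit_hop:
  "logit M xs (Subj s) =
     2 * real s * tf_output M xs (length xs - 1) 1 - real s ^ 2 * tf_output M xs (length xs - 1) 0"
  "logit M xs (Rel r) = - tf_output M xs (length xs - 1) 0"
proof -
  have "logit M xs t = (\<Sum>a\<in>{0, 1}. tf_unemb M t a * tf_output M xs (length xs - 1) a)" for t
    unfolding logit_def
    by (rule sum.mono_neutral_right) (auto simp: hop_transformer_def split: tok.split)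
  then show "logit M xs (Subj s) =
      2 * real s * tf_output M xs (length xs - 1) 1 - real s ^ 2 * tf_output M xs (length xs - 1) 0"
    and "logit M xs (Rel r) = - tf_output M xs (length xs - 1) 0"
    by (simp_all add: hop_transformer_def)
qed

lemma decode_hop:
  assumes "tf_output M xs (length xs - 1) 0 = 1" "tf_output M xs (length xs - 1) 1 = real z"
    and "z \<in> {1..N}"
  shows "decode M N R xs = Some (Subj z)"
proof (rule decode_eq_SomeI)
  show "Subj z \<in> vocab N R"
    using assms(3) by (simp add: vocab_def)
next
  have subj: "logit M xs (Subj s) = real z ^ 2 - (real s - real z) ^ 2" for s
    using assms by (simp add: logit_hop power2_eq_square algebra_simps)
  fix t assume "t \<in> vocab N R" "t \<noteq> Subj z"
  then show "logit M xs t < logit M xs (Subj z)"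
  proof (cases t)
    case (Subj s)
    with \<open>t \<noteq> Subj z\<close> have "0 < (real s - real z) ^ 2"
      by simp
    then show ?thesis
      using Subj by (simp add: subj)
  next
    case (Rel r)
    have "- 1 < real z ^ 2"
      using zero_le_power2[of "real z"] by linarith
    then show ?thesis
      using Rel assms by (simp add: logit_hop(2) subj)
  qed
qed

end

(* The tokens xs are the prompt followed by the subjects ss generated so far, so the next
   hop applies cur_rel to cur_subj. Only g r ` {1..N} \<subseteq> {1..N} is needed, not bijectivity. *)
locale hop_cot_state = hop_setting +
  fixes s0 :: nat and rs ss :: "nat list"
  assumes g_maps: "\<And>r s. r \<in> {1..R} \<Longrightarrow> s \<in> {1..N} \<Longrightarrow> g r s \<in> {1..N}"
    and s0: "s0 \<in> {1..N}" and rs_len: "length rs = k" and rs_set: "set rs \<subseteq> {1..R}"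
    and ss_set: "set ss \<subseteq> {1..N}" and ss_len: "length ss < k"
begin

abbreviation "xs \<equiv> Subj s0 # map Rel rs @ map Subj ss"
abbreviation "last_pos \<equiv> k + length ss"
abbreviation "resid \<equiv> \<lambda>a. attn_out M xs last_pos a + tf_input M xs last_pos a"
abbreviation "cur_rel \<equiv> rs ! length ss"
abbreviation "cur_subj \<equiv> last (s0 # ss)"

lemma length_xs: "length xs = last_pos + 1"
  using rs_len by simp

lemma nth_xs_cur_rel: "xs ! (length ss + 1) = Rel cur_rel"
  using rs_len ss_len by (simp add: nth_append)

lemma nth_xs_last_pos: "xs ! last_pos = (if ss = [] then Rel (rs ! (k - 1)) else Subj cur_subj)"
  using rs_len ss_len by (cases ss) (auto simp: nth_Cons' nth_append last_conv_nth)

lemma cur_rel_in: "cur_rel \<in> {1..R}"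
  using rs_set rs_len ss_len nth_mem by blast

lemma cur_subj_in: "cur_subj \<in> {1..N}"
  using s0 ss_set last_in_set[of "s0 # ss"] by auto

lemma table_entry_bounds:
  assumes "i \<le> last_pos" "r \<in> {1..R}"
  shows "0 \<le> table_entry g (xs ! i) r \<and> table_entry g (xs ! i) r \<le> real N"
proof -
  have "xs ! i \<in> set xs"
    using assms(1) length_xs by (intro nth_mem) simp
  then have "s \<in> {1..N}" if "xs ! i = Subj s" for s
    using that s0 ss_set by auto
  then show ?thesis
    using g_maps[OF assms(2)] by (cases "xs ! i") (auto simp: table_entry_def)
qed

lemma resid_const: "resid 0 = 1"
  using attn_out_outside_heads[of 0] input_const[of xs last_pos] by simp

lemma resid_answer: "resid 1 = 0"
  using attn_out_outside_heads[of 1] input_answer[of xs last_pos] by simp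

lemma resid_table: "r \<in> {1..R} \<Longrightarrow> resid (table_coord R r) = table_entry g (xs ! last_pos) r"
  using attn_out_outside_heads[of "table_coord R r"] input_table[of r xs last_pos]
  by (simp add: table_coord_def)

lemma resid_first_step: "resid (pos_coord R k) = (if ss = [] then 1 else 0)"
  using attn_out_outside_heads[of "pos_coord R k"] input_pos[of "pos_coord R k" xs last_pos]
  by (simp add: pos_coord_def)

lemma resid_sel:
  "r \<in> {1..R} \<Longrightarrow>
     resid (sel_coord R r) = (\<Sum>i\<le>last_pos. attn_weight M xs 0 i last_pos * (if xs ! i = Rel r then 1 else 0))"
  by (simp add: attn_out_sel input_rel input_sel)

lemma resid_avg:
  "r \<in> {1..R} \<Longrightarrow> resid (avg_coord R r) = (\<Sum>i\<le>last_pos. table_entry g (xs ! i) r) / (real last_pos + 1)"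
  by (simp add: attn_out_avg input_table input_avg)

lemma weight_cur_rel_ge: "3/4 \<le> attn_weight M xs 0 (length ss + 1) last_pos"
proof -
  have "3/4 \<le> 6 * real k / (6 * real k + real last_pos)"
    using ss_len k_pos by (simp add: field_simps)
  then show ?thesis
    using weight_head0[of "length ss + 1" last_pos xs] ss_len by simp
qed

lemma sel_cur_rel: "3/4 \<le> resid (sel_coord R cur_rel) \<and> resid (sel_coord R cur_rel) \<le> 1"
proof -
  let ?w = "\<lambda>i. attn_weight M xs 0 i last_pos"
  let ?sel = "\<lambda>i. ?w i * (if xs ! i = Rel cur_rel then 1 else 0)"
  have "3/4 \<le> ?sel (length ss + 1)"
    using weight_cur_rel_ge nth_xs_cur_rel by simp
  also have "\<dots> \<le> sum ?sel {..last_pos}"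
    using k_pos by (intro member_le_sum) (auto simp: attn_weight_nonneg)
  finally have lower: "3/4 \<le> sum ?sel {..last_pos}" .
  have "sum ?sel {..last_pos} \<le> sum ?w {..last_pos}"
    by (intro sum_mono) (auto simp: attn_weight_nonneg)
  then have upper: "sum ?sel {..last_pos} \<le> 1"
    by (simp add: sum_attn_weight)
  show ?thesis
    using lower upper resid_sel[OF cur_rel_in] by simp
qed

lemma sel_other:
  assumes "r \<in> {1..R}" "r \<noteq> cur_rel"
  shows "resid (sel_coord R r) \<le> 1/4"
proof -
  let ?w = "\<lambda>i. attn_weight M xs 0 i last_pos"
  have "(\<Sum>i\<le>last_pos. ?w i * (if xs ! i = Rel r then 1 else 0))
      \<le> (\<Sum>i\<le>last_pos. ?w i - (if i = length ss + 1 then ?w i else 0))"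
    using assms(2) nth_xs_cur_rel by (intro sum_mono) (auto simp: attn_weight_nonneg)
  also have "\<dots> = 1 - ?w (length ss + 1)"
    using ss_len by (simp add: sum_subtractf sum_attn_weight)
  also have "\<dots> \<le> 1/4"
    using weight_cur_rel_ge by simp
  finally show ?thesis
    using resid_sel[OF assms(1)] by simp
qed

lemma avg_bounds:
  assumes "r \<in> {1..R}"
  shows "0 \<le> resid (avg_coord R r) \<and> resid (avg_coord R r) \<le> real N"
proof -
  have "(\<Sum>i\<le>last_pos. table_entry g (xs ! i) r) \<le> (real last_pos + 1) * real N"
    using sum_bounded_above[of "{..last_pos}" "\<lambda>i. table_entry g (xs ! i) r" "real N"]
      table_entry_bounds[OF _ assms] by (simp add: add.commute)
  moreover have "0 \<le> (\<Sum>i\<le>last_pos. table_entry g (xs ! i) r)"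
    using table_entry_bounds[OF _ assms] by (intro sum_nonneg) simp
  ultimately show ?thesis
    using resid_avg[OF assms] by (simp add: divide_le_eq mult.commute)
qed

lemma avg_first_step:
  assumes "r \<in> {1..R}" "ss = []"
  shows "(real k + 1) * resid (avg_coord R r) = real (g r s0)"
proof -
  have "(\<Sum>i\<le>last_pos. table_entry g (xs ! i) r) = (\<Sum>i\<le>k. if i = 0 then real (g r s0) else 0)"
    using assms(2) rs_len by (intro sum.cong) (auto simp: nth_Cons' table_entry_def)
  then show ?thesis
    using resid_avg[OF assms(1)] assms(2) by simp
qed

lemma table_cur:
  "r \<in> {1..R} \<Longrightarrow> resid (table_coord R r) = (if ss = [] then 0 else real (g r cur_subj))"
  by (simp add: resid_table nth_xs_last_pos table_entry_def)

lemma gate_hop: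
  assumes r: "r \<in> {1..R}"
  shows "relu_gate (4 * real N * (real k + 1)) (resid (table_coord R r))
      ((real k + 1) * resid (avg_coord R r)) (resid (sel_coord R r)) (resid (pos_coord R k))
    = (if r = cur_rel then real (g cur_rel cur_subj) else 0)"
proof -
  have table: "0 \<le> resid (table_coord R r)" "resid (table_coord R r) \<le> real N"
    using table_entry_bounds[of last_pos r] r by (simp_all add: resid_table)
  have "(real k + 1) * resid (avg_coord R r) \<le> (real k + 1) * real N"
    using avg_bounds[OF r] by (intro mult_left_mono) auto
  then have avg: "0 \<le> (real k + 1) * resid (avg_coord R r)"
      "(real k + 1) * resid (avg_coord R r) \<le> real N * (real k + 1)"
    using avg_bounds[OF r] by (simp_all add: mult.commute)
  have "real N \<le> real N * (real k + 1)"
    by (simp add: algebra_simps)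
  consider (first) "r = cur_rel" "ss = []" | (later) "r = cur_rel" "ss \<noteq> []" | (other) "r \<noteq> cur_rel"
    by blast
  then show ?thesis
  proof cases
    case first
    then show ?thesis
      using relu_gate_select_first[OF _ avg(1), of "4 * real N * (real k + 1)" "resid (sel_coord R r)"]
        sel_cur_rel table_cur[OF r] resid_first_step avg_first_step[OF r]
      by simp
  next
    case later
    then show ?thesis
      using relu_gate_select[of "4 * real N * (real k + 1)" "resid (table_coord R r)"]
        table avg sel_cur_rel table_cur[OF r] resid_first_step
      by simp
  next
    case other
    then show ?thesis
      using relu_gate_off[of "4 * real N * (real k + 1)" "resid (table_coord R r)"]
        table avg \<open>real N \<le> real N * (real k + 1)\<close> sel_other[OF r] resid_first_step
      by simp
  qed
qed

lemma output_const: "tf_output M xs last_pos 0 = 1"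
  using resid_const by (simp add: tf_output_def mlp_hop_const)

lemma output_answer: "tf_output M xs last_pos 1 = real (g cur_rel cur_subj)"
proof -
  have "mlp M resid 1 = (\<Sum>r = 1..R. if r = cur_rel then real (g cur_rel cur_subj) else 0)"
    unfolding mlp_hop_answer by (rule sum.cong) (simp_all add: gate_hop)
  then show ?thesis
    using resid_answer cur_rel_in by (simp add: tf_output_def)
qed

lemma decode_next_hop: "decode M N R xs = Some (Subj (g cur_rel cur_subj))"
  using decode_hop[of xs] output_const output_answer g_maps[OF cur_rel_in cur_subj_in] length_xs
  by simp

end

lemma hop_transformer_dims:
  "tf_dim (hop_transformer N R k g) = 4 * R + 2 + 2 * k"
  "tf_width (hop_transformer N R k g) = 4 * R"
  by (simp_all add: hop_transformer_def)

lemma cot_gen_hop_transformer: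
  assumes g_maps: "\<And>r s. r \<in> {1..R} \<Longrightarrow> s \<in> {1..N} \<Longrightarrow> g r s \<in> {1..N}"
    and s0: "s0 \<in> {1..N}" and rs: "length rs = k" "set rs \<subseteq> {1..R}"
  shows "cot_gen (hop_transformer N R k g) N R (Subj s0 # map Rel rs) k = Some (map Subj (hops g s0 rs))"
proof -
  let ?H = "hops g s0 rs"
  have "decode (hop_transformer N R k g) N R ((Subj s0 # map Rel rs) @ take m (map Subj ?H))
      = Some (map Subj ?H ! m)" if m: "m < length (map Subj ?H)" for m
  proof -
    have "set ?H \<subseteq> {1..N}"
      using g_maps s0 rs(2) by (rule set_hops_subset)
    then have "set (take m ?H) \<subseteq> {1..N}"
      by (rule order_trans[OF set_take_subset])
    moreover have "m < k"
      using m rs(1) by simp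
    ultimately interpret hop_cot_state N R k g s0 rs "take m ?H"
      by unfold_locales (use g_maps s0 rs in simp_all)
    have "decode (hop_transformer N R k g) N R (Subj s0 # map Rel rs @ map Subj (take m ?H))
        = Some (Subj (g (rs ! m) (last (s0 # take m ?H))))"
      using decode_next_hop \<open>m < k\<close> rs(1) by simp
    then show ?thesis
      using nth_hops[of m rs g s0] m by (simp add: take_map)
  qed
  then show ?thesis
    using cot_gen_eq_SomeI[of "map Subj ?H"] rs(1) by simp
qed

theorem theorem4:
  shows "\<exists>(C::real) (c::real). C > 0 \<and>
    (\<forall>(N::nat) (R::nat) (k::nat) (g::nat \<Rightarrow> nat \<Rightarrow> nat).
       N \<ge> 1 \<longrightarrow> R \<ge> 1 \<longrightarrow>
       (\<forall>r\<in>{1..R}. bij_betw (g r) {1..N} {1..N}) \<longrightarrow>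
       (\<exists>M::tf.
          real (tf_dim M) \<le> C * real (R + k) * ln (real (N + R + k + 2)) powr c \<and>
          real (tf_width M) \<le> C * real R * ln (real (N + R + k + 2)) powr c \<and>
          (\<forall>s0\<in>{1..N}. \<forall>rs. length rs = k \<and> set rs \<subseteq> {1..R} \<longrightarrow>
             cot_gen M N R (Subj s0 # map Rel rs) k = Some (map Subj (hops g s0 rs)))))"
proof (rule exI[of _ 6], rule exI[of _ 0], intro conjI allI impI)
  fix N R k :: nat and g :: "nat \<Rightarrow> nat \<Rightarrow> nat"
  assume "N \<ge> 1" "R \<ge> 1" and bij: "\<forall>r\<in>{1..R}. bij_betw (g r) {1..N} {1..N}"
  have g_maps: "g r s \<in> {1..N}" if "r \<in> {1..R}" "s \<in> {1..N}" for r s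
    using bij that bij_betwE by blast
  have no_log: "ln (real (N + R + k + 2)) powr 0 = 1"
    by simp
  show "\<exists>M. real (tf_dim M) \<le> 6 * real (R + k) * ln (real (N + R + k + 2)) powr 0 \<and>
      real (tf_width M) \<le> 6 * real R * ln (real (N + R + k + 2)) powr 0 \<and>
      (\<forall>s0\<in>{1..N}. \<forall>rs. length rs = k \<and> set rs \<subseteq> {1..R} \<longrightarrow>
         cot_gen M N R (Subj s0 # map Rel rs) k = Some (map Subj (hops g s0 rs)))"
  proof (intro exI[of _ "hop_transformer N R k g"] conjI ballI allI impI)
    show "real (tf_dim (hop_transformer N R k g)) \<le> 6 * real (R + k) * ln (real (N + R + k + 2)) powr 0"
      "real (tf_width (hop_transformer N R k g)) \<le> 6 * real R * ln (real (N + R + k + 2)) powr 0"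
      using \<open>R \<ge> 1\<close> by (simp_all add: no_log hop_transformer_dims)
  next
    fix s0 rs assume "s0 \<in> {1..N}" "length rs = k \<and> set rs \<subseteq> {1..R}"
    then show "cot_gen (hop_transformer N R k g) N R (Subj s0 # map Rel rs) k = Some (map Subj (hops g s0 rs))"
      using g_maps by (intro cot_gen_hop_transformer) auto
  qed
qed simp

end
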